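(* Let $r$ be a positive integer and $\chi(i,j)=e^{2\pi i\, ijr/(2r+1)}$ on $\mathbb Z/(2r+1)$, and $\tau\in\{\pm1\}$. For each $n\in(\mathbb Z/(2r+1))^\times$ with $n^2=1$ there is a monoidal auto-equivalence $\mathcal F_n$ of $\mathcal{TY}(\mathbb Z/(2r+1),\chi,\tau)$ with $\mathcal F_n(m)=m$, $\mathcal F_n(i)=ni$, and trivial tensorator; and $n\mapsto\mathcal F_n$ is a group isomorphism $\{n\in(\mathbb Z/(2r+1))^\times: n^2=1\}\to\mathrm{TenAut}(\mathcal{TY}(\mathbb Z/(2r+1),\chi,\tau))$.
   Context: The Tambara–Yamagami category $\mathcal{TY}(G,\chi,\tau)$ (for $G$ finite abelian, $\chi$ a nondegenerate symmetric bicharacter, $\tau=\pm1$) has simple objects $G\sqcup\{m\}$, fusion $i\otimes j=i+j$, $i\otimes m=m\otimes i=m$, $m\otimes m=\bigoplus_{g\in G} g$, and trivial associators except $\alpha_{i,m,j}=\chi(i,j)\mathrm{id}_m$, $(\alpha_{m,i,m})_{j,j}=\chi(i,j)\mathrm{id}_j$, $(\alpha_{m,m,m})_{i,j}=\frac{\tau}{\sqrt{|G|}}\chi(i,j)^{-1}$. $\mathrm{TenAut}$ is the group of monoidal auto-equivalences up to monoidal natural isomorphism. *)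

theory Defs
  imports Complex_Main "HOL-Algebra.Group"
begin

text \<open>Simple objects: Gr i (i in {0..<N}, representing Z/N) and the object m (Mo).\<close>

datatype ty_obj = Gr int | Mo

definition ty_simples :: "int \<Rightarrow> ty_obj set" where
  "ty_simples N = Gr ` {0..<N} \<union> {Mo}"

text \<open>Fusion rules: ty_fus N a b c means that c occurs (with multiplicity one) in a \<otimes> b.\<close>
fun ty_fus :: "int \<Rightarrow> ty_obj \<Rightarrow> ty_obj \<Rightarrow> ty_obj \<Rightarrow> bool" where
  "ty_fus N (Gr i) (Gr j) c = (c = Gr ((i + j) mod N))"
| "ty_fus N (Gr i) Mo c = (c = Mo)"
| "ty_fus N Mo (Gr j) c = (c = Mo)"
| "ty_fus N Mo Mo c = (c \<in> Gr ` {0..<N})"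

text \<open>For simples a b c d, the space Hom(d,(a\<otimes>b)\<otimes>c) has a
  basis indexed by e with e in a\<otimes>b, d in e\<otimes>c, and Hom(d,a\<otimes>(b\<otimes>c)) a basis indexed by
  f with f in b\<otimes>c, d in a\<otimes>f.  ty_F N chi tau a b c d e f is the matrix entry of
  the associator alpha_{a,b,c} on the d-isotypic part, from basis vector e to basis
  vector f.\<close>
fun ty_F :: "int \<Rightarrow> (int \<Rightarrow> int \<Rightarrow> complex) \<Rightarrow> complex \<Rightarrow>
    ty_obj \<Rightarrow> ty_obj \<Rightarrow> ty_obj \<Rightarrow> ty_obj \<Rightarrow> ty_obj \<Rightarrow> ty_obj \<Rightarrow> complex" where
  "ty_F N chi tau (Gr i) Mo (Gr j) d e f = chi i j"
| "ty_F N chi tau Mo (Gr i) Mo (Gr j) e f = chi i j"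
| "ty_F N chi tau Mo Mo Mo Mo (Gr i) (Gr j) =
     tau / complex_of_real (sqrt (real_of_int N)) * inverse (chi i j)"
| "ty_F N chi tau a b c d e f = 1"

definition ty_adm :: "int \<Rightarrow> ty_obj \<Rightarrow> ty_obj \<Rightarrow> ty_obj \<Rightarrow> ty_obj \<Rightarrow> ty_obj \<Rightarrow> ty_obj \<Rightarrow> bool" where
  "ty_adm N a b c d e f \<longleftrightarrow>
     {a, b, c, d, e, f} \<subseteq> ty_simples N \<and>
     ty_fus N a b e \<and> ty_fus N e c d \<and> ty_fus N b c f \<and> ty_fus N a f d"

text \<open>Skeletal data of a (linear) monoidal auto-equivalence: a permutation phi of the
  simple objects together with the tensorator J, where J a b c is the (nonzero) scalar
  by which J_{a,b} : F(a)\<otimes>F(b) \<rightarrow> F(a\<otimes>b) acts on the c-summand.\<close>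
type_synonym ty_fun = "(ty_obj \<Rightarrow> ty_obj) \<times> (ty_obj \<Rightarrow> ty_obj \<Rightarrow> ty_obj \<Rightarrow> complex)"

definition ty_autoeq :: "int \<Rightarrow> (int \<Rightarrow> int \<Rightarrow> complex) \<Rightarrow> complex \<Rightarrow> ty_fun \<Rightarrow> bool" where
  "ty_autoeq N chi tau FJ \<longleftrightarrow>
     (let \<phi> = fst FJ; J = snd FJ; S = ty_simples N in
       bij_betw \<phi> S S \<and>
       (\<forall>a\<in>S. \<forall>b\<in>S. \<forall>c\<in>S. ty_fus N (\<phi> a) (\<phi> b) (\<phi> c) = ty_fus N a b c) \<and>
       (\<forall>a\<in>S. \<forall>b\<in>S. \<forall>c\<in>S. ty_fus N a b c \<longrightarrow> J a b c \<noteq> 0) \<and>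
       (\<forall>a\<in>S. J (Gr 0) a a = 1 \<and> J a (Gr 0) a = 1) \<and>
       (\<forall>a b c d e f. ty_adm N a b c d e f \<longrightarrow>
          J a b e * J e c d * ty_F N chi tau a b c d e f =
          ty_F N chi tau (\<phi> a) (\<phi> b) (\<phi> c) (\<phi> d) (\<phi> e) (\<phi> f) * J b c f * J a f d))"

definition ty_auts :: "int \<Rightarrow> (int \<Rightarrow> int \<Rightarrow> complex) \<Rightarrow> complex \<Rightarrow> ty_fun set" where
  "ty_auts N chi tau = {FJ. ty_autoeq N chi tau FJ}"

definition ty_moniso :: "int \<Rightarrow> (int \<Rightarrow> int \<Rightarrow> complex) \<Rightarrow> complex \<Rightarrow> ty_fun rel" where
  "ty_moniso N chi tau =
     {(FJ, GK). FJ \<in> ty_auts N chi tau \<and> GK \<in> ty_auts N chi tau \<and>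
        (\<forall>a\<in>ty_simples N. fst FJ a = fst GK a) \<and>
        (\<exists>\<eta> :: ty_obj \<Rightarrow> complex. (\<forall>a\<in>ty_simples N. \<eta> a \<noteq> 0) \<and>
           (\<forall>a\<in>ty_simples N. \<forall>b\<in>ty_simples N. \<forall>c\<in>ty_simples N. ty_fus N a b c \<longrightarrow>
              \<eta> c * snd FJ a b c = snd GK a b c * \<eta> a * \<eta> b))}"

definition ty_comp :: "ty_fun \<Rightarrow> ty_fun \<Rightarrow> ty_fun" where
  "ty_comp FJ GK = (fst FJ \<circ> fst GK,
     \<lambda>a b c. snd FJ (fst GK a) (fst GK b) (fst GK c) * snd GK a b c)"

definition ty_id :: ty_fun where
  "ty_id = (id, \<lambda>a b c. 1)"

definition TenAut :: "int \<Rightarrow> (int \<Rightarrow> int \<Rightarrow> complex) \<Rightarrow> complex \<Rightarrow> ty_fun set monoid" where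
  "TenAut N chi tau =
     \<lparr> carrier = ty_auts N chi tau // ty_moniso N chi tau,
       mult = (\<lambda>X Y. ty_moniso N chi tau `` {ty_comp (SOME x. x \<in> X) (SOME y. y \<in> Y)}),
       one = ty_moniso N chi tau `` {ty_id} \<rparr>"

fun ty_mult_obj :: "int \<Rightarrow> int \<Rightarrow> ty_obj \<Rightarrow> ty_obj" where
  "ty_mult_obj N n (Gr i) = Gr ((n * i) mod N)"
| "ty_mult_obj N n Mo = Mo"

definition ty_Fn :: "int \<Rightarrow> int \<Rightarrow> ty_fun" where
  "ty_Fn N n = (ty_mult_obj N n, \<lambda>a b c. 1)"

definition sq1_group :: "int \<Rightarrow> int monoid" where
  "sq1_group N =
     \<lparr> carrier = {n \<in> {0..<N}. coprime n N \<and> (n * n) mod N = 1 mod N},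
       mult = (\<lambda>a b. (a * b) mod N),
       one = 1 mod N \<rparr>"

definition ty_chi :: "nat \<Rightarrow> int \<Rightarrow> int \<Rightarrow> complex" where
  "ty_chi r i j = exp (2 * complex_of_real pi * \<i> * of_int (i * j * int r) / of_int (2 * int r + 1))"

end

(*
  An autoequivalence (phi, J) fixes the unit object and the object m, so additivity of the
  fusion rules forces phi (i) = n i with n = phi (1).  Comparing the associators
  alpha_{i,m,j} = chi (i, j) on both sides gives chi (n i, n j) = chi (i, j); for
  chi (a, b) = exp (2 pi sqrt(-1) a b r / (2r + 1)) this says n^2 = 1, since r is invertible
  modulo 2r + 1.  The compatibility conditions at the tuples with trivial F-symbols make J a
  coboundary, so (phi, J) is monoidally isomorphic to F_n.  Finally F_n F_m = F_(n m), and
  F_n determines n.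
*)

theory Submission
  imports Defs "HOL-Analysis.Complex_Transcendental"
begin

section \<open>Roots of unity modulo 2r + 1\<close>

lemma exp_2pi_frac_eq_iff:
  fixes N x y :: int
  assumes "N > 0"
  shows "exp (2 * complex_of_real pi * \<i> * of_int x / of_int N) =
           exp (2 * complex_of_real pi * \<i> * of_int y / of_int N) \<longleftrightarrow>
         x mod N = y mod N"
proof -
  have shift: "2 * complex_of_real pi * \<i> * of_int x / of_int N =
                 2 * complex_of_real pi * \<i> * of_int y / of_int N + of_int (2 * k) * pi * \<i>
               \<longleftrightarrow> x = y + k * N" for k :: int
  proof -
    have "2 * complex_of_real pi * \<i> * of_int x / of_int N =
            2 * complex_of_real pi * \<i> * of_int y / of_int N + of_int (2 * k) * pi * \<i>
          \<longleftrightarrow> (2 * complex_of_real pi * \<i>) * of_int x = (2 * complex_of_real pi * \<i>) * of_int (y + k * N)"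
      using assms by (simp add: field_simps)
    also have "\<dots> \<longleftrightarrow> x = y + k * N"
      by (simp only: mult_cancel_left of_int_eq_iff) simp
    finally show ?thesis .
  qed
  have "x mod N = y mod N \<longleftrightarrow> (\<exists>k. x = y + k * N)"
    by (metis mod_eqE mod_mult_self2 mult.commute)
  then show ?thesis
    unfolding exp_eq shift by simp
qed

lemma ty_chi_mult_invariant:
  assumes "(n * n) mod (2 * int r + 1) = 1 mod (2 * int r + 1)"
  shows "ty_chi r ((n * i) mod (2 * int r + 1)) ((n * j) mod (2 * int r + 1)) = ty_chi r i j"
proof -
  let ?N = "2 * int r + 1"
  have "((n * i) mod ?N * ((n * j) mod ?N) * int r) mod ?N = ((n * n) * (i * j * int r)) mod ?N"
    by (metis (no_types, lifting) mod_mult_left_eq mod_mult_right_eq mult.assoc mult.left_commute)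
  also have "\<dots> = (1 * (i * j * int r)) mod ?N"
    using assms by (metis mod_mult_left_eq)
  finally show ?thesis
    unfolding ty_chi_def by (subst exp_2pi_frac_eq_iff) auto
qed

lemma ty_chi_diag_eq_imp_square_one:
  assumes "ty_chi r n n = ty_chi r 1 1"
  shows "(n * n) mod (2 * int r + 1) = 1 mod (2 * int r + 1)"
proof -
  let ?N = "2 * int r + 1"
  have "(n * n * int r) mod ?N = (1 * 1 * int r) mod ?N"
    using assms unfolding ty_chi_def by (subst (asm) exp_2pi_frac_eq_iff) auto
  then have "?N dvd (n * n - 1) * int r"
    by (metis mod_eq_dvd_iff left_diff_distrib' mult_1)
  moreover have "coprime ?N (int r)"
  proof (rule coprimeI)
    fix c
    assume "c dvd ?N" "c dvd int r"
    then have "c dvd ?N - 2 * int r"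
      by (metis dvd_diff dvd_mult)
    then show "is_unit c"
      by simp
  qed
  ultimately have "?N dvd n * n - 1"
    using coprime_dvd_mult_left_iff by blast
  then show ?thesis
    by (simp only: mod_eq_dvd_iff)
qed

lemma coprime_if_square_mod_eq_one:
  fixes n N :: int
  assumes "(n * n) mod N = 1 mod N"
  shows "coprime n N"
proof (rule coprimeI)
  fix c
  assume "c dvd n" "c dvd N"
  moreover obtain k where k: "n * n - 1 = N * k"
    using assms by (metis mod_eq_dvd_iff dvdE)
  ultimately have "c dvd n * n - N * k"
    by simp
  also have "n * n - N * k = 1"
    using k by simp
  finally show "is_unit c"
    by simp
qed

section \<open>The autoequivalences F_n\<close>

lemma ty_simples_Gr_iff [simp]: "Gr i \<in> ty_simples N \<longleftrightarrow> 0 \<le> i \<and> i < N"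
  by (auto simp: ty_simples_def)

lemma ty_simples_Mo [simp]: "Mo \<in> ty_simples N"
  by (simp add: ty_simples_def)

lemma ty_mult_obj_in_simples:
  assumes "N > 0" "a \<in> ty_simples N"
  shows "ty_mult_obj N n a \<in> ty_simples N"
  using assms by (cases a) auto

lemma ty_mult_obj_mult:
  "ty_mult_obj N n (ty_mult_obj N m a) = ty_mult_obj N ((n * m) mod N) a"
proof (cases a)
  case (Gr i)
  have "(n * (m * i mod N)) mod N = ((n * m) mod N * i) mod N"
    by (metis mod_mult_left_eq mod_mult_right_eq mult.assoc)
  then show ?thesis
    using Gr by simp
qed simp

lemma ty_mult_obj_one:
  assumes "a \<in> ty_simples N"
  shows "ty_mult_obj N (1 mod N) a = a"
  using assms by (cases a) (auto simp: mod_mult_left_eq)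

lemma ty_mult_obj_involution:
  assumes "(n * n) mod N = 1 mod N" "a \<in> ty_simples N"
  shows "ty_mult_obj N n (ty_mult_obj N n a) = a"
  using assms by (simp add: ty_mult_obj_mult ty_mult_obj_one)

lemma ty_mult_obj_Gr_add:
  "ty_mult_obj N n (Gr ((i + j) mod N)) = Gr ((n * i mod N + n * j mod N) mod N)"
  by (simp add: mod_add_eq mod_mult_right_eq distrib_left)

lemma ty_fus_mult_obj:
  assumes N: "N > 0" and n2: "(n * n) mod N = 1 mod N"
    and c: "c \<in> ty_simples N"
  shows "ty_fus N (ty_mult_obj N n a) (ty_mult_obj N n b) (ty_mult_obj N n c) = ty_fus N a b c"
proof (cases a; cases b)
  fix i j
  assume ab: "a = Gr i" "b = Gr j"
  let ?f = "ty_mult_obj N n"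
  have "ty_fus N (?f a) (?f b) (?f c) \<longleftrightarrow> ?f c = ?f (Gr ((i + j) mod N))"
    using ab by (simp only: ty_mult_obj_Gr_add) simp
  also have "\<dots> \<longleftrightarrow> c = Gr ((i + j) mod N)"
    using c N ty_mult_obj_involution[OF n2] by (metis pos_mod_bound pos_mod_sign ty_simples_Gr_iff)
  finally show ?thesis
    using ab by simp
qed (use N c in \<open>cases c; auto\<close>)+

lemma ty_F_mult_obj:
  assumes "\<And>i j. chi ((n * i) mod N) ((n * j) mod N) = chi i j"
  shows "ty_F N chi tau (ty_mult_obj N n a) (ty_mult_obj N n b) (ty_mult_obj N n c)
           (ty_mult_obj N n d) (ty_mult_obj N n e) (ty_mult_obj N n f) =
         ty_F N chi tau a b c d e f"
  by (cases a; cases b; cases c; cases d; cases e; cases f) (simp_all add: assms)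

lemma ty_Fn_autoeq:
  assumes N: "N > 0" and n2: "(n * n) mod N = 1 mod N"
    and chi: "\<And>i j. chi ((n * i) mod N) ((n * j) mod N) = chi i j"
  shows "ty_autoeq N chi tau (ty_Fn N n)"
proof -
  have "bij_betw (ty_mult_obj N n) (ty_simples N) (ty_simples N)"
    by (rule bij_betw_byWitness[where f' = "ty_mult_obj N n"])
      (use ty_mult_obj_involution[OF n2] ty_mult_obj_in_simples[OF N] in auto)
  then show ?thesis
    unfolding ty_autoeq_def ty_Fn_def Let_def
    using ty_fus_mult_obj[OF N n2] ty_F_mult_obj[of chi n N, OF chi] by auto
qed

section \<open>Classification of autoequivalences\<close>

lemma ty_autoeqD:
  assumes "ty_autoeq N chi tau (\<phi>, J)"
  shows "bij_betw \<phi> (ty_simples N) (ty_simples N)"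
    and "\<And>a b c. a \<in> ty_simples N \<Longrightarrow> b \<in> ty_simples N \<Longrightarrow> c \<in> ty_simples N \<Longrightarrow>
           ty_fus N (\<phi> a) (\<phi> b) (\<phi> c) = ty_fus N a b c"
    and "\<And>a b c. a \<in> ty_simples N \<Longrightarrow> b \<in> ty_simples N \<Longrightarrow> c \<in> ty_simples N \<Longrightarrow>
           ty_fus N a b c \<Longrightarrow> J a b c \<noteq> 0"
    and "\<And>a. a \<in> ty_simples N \<Longrightarrow> J (Gr 0) a a = 1"
    and "\<And>a. a \<in> ty_simples N \<Longrightarrow> J a (Gr 0) a = 1"
    and "\<And>a b c d e f. ty_adm N a b c d e f \<Longrightarrow>
          J a b e * J e c d * ty_F N chi tau a b c d e f =
          ty_F N chi tau (\<phi> a) (\<phi> b) (\<phi> c) (\<phi> d) (\<phi> e) (\<phi> f) * J b c f * J a f d"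
  using assms unfolding ty_autoeq_def Let_def by auto

lemma ty_autoeq_fixes_unit:
  assumes A: "ty_autoeq N chi tau (\<phi>, J)" and N: "N > 0"
  shows "\<phi> (Gr 0) = Gr 0"
proof -
  note bij = ty_autoeqD(1)[OF A]
  have G0: "Gr 0 \<in> ty_simples N"
    using N by simp
  then obtain z where z: "z \<in> ty_simples N" "\<phi> z = Gr 0"
    using bij by (metis bij_betw_def imageE)
  have "ty_fus N (\<phi> (Gr 0)) (\<phi> z) (\<phi> z)"
    using ty_autoeqD(2)[OF A G0 z(1) z(1)] z(1) by (cases z) auto
  moreover have "\<phi> (Gr 0) \<in> ty_simples N"
    using bij G0 bij_betwE by blast
  ultimately show ?thesis
    using z(2) by (cases "\<phi> (Gr 0)") auto
qed

text \<open>The object Mo is characterised as the only simple whose square is not simple.\<close>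

lemma ty_autoeq_fixes_Mo:
  assumes A: "ty_autoeq N chi tau (\<phi>, J)" and N: "N > 1"
  shows "\<phi> Mo = Mo"
proof -
  note bij = ty_autoeqD(1)[OF A]
  have G: "Gr 0 \<in> ty_simples N" "Gr 1 \<in> ty_simples N"
    using N by simp_all
  have "ty_fus N (\<phi> Mo) (\<phi> Mo) (\<phi> (Gr 0))" "ty_fus N (\<phi> Mo) (\<phi> Mo) (\<phi> (Gr 1))"
    using ty_autoeqD(2)[OF A] G N by auto
  moreover have "\<phi> (Gr 0) \<noteq> \<phi> (Gr 1)"
    using bij G by (metis bij_betw_def inj_onD ty_obj.inject zero_neq_one)
  ultimately show ?thesis
    by (cases "\<phi> Mo") auto
qed

lemma ty_autoeq_obtain_mult_obj:
  assumes A: "ty_autoeq N chi tau (\<phi>, J)" and N: "N > 1"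
  obtains n where "0 \<le> n" "n < N" "\<forall>a\<in>ty_simples N. \<phi> a = ty_mult_obj N n a"
proof -
  let ?S = "ty_simples N"
  note bij = ty_autoeqD(1)[OF A] and fus = ty_autoeqD(2)[OF A]
  have inj: "inj_on \<phi> ?S" and img: "\<phi> ` ?S = ?S"
    using bij by (auto simp: bij_betw_def)
  have "\<phi> (Gr 1) \<in> ?S"
    using img N by auto
  moreover have "\<phi> (Gr 1) \<noteq> Mo"
    using inj_onD[OF inj, of "Gr 1" Mo] ty_autoeq_fixes_Mo[OF A N] N by auto
  ultimately
  obtain n where n: "\<phi> (Gr 1) = Gr n" "0 \<le> n" "n < N"
    by (cases "\<phi> (Gr 1)") auto
  have \<phi>_Gr: "\<phi> (Gr (int k)) = Gr ((n * int k) mod N)" if "int k < N" for k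
    using that
  proof (induction k)
    case 0
    then show ?case
      using ty_autoeq_fixes_unit[OF A] N by simp
  next
    case (Suc k)
    have S: "Gr (int k) \<in> ?S" "Gr 1 \<in> ?S" "Gr (int (Suc k)) \<in> ?S"
      using Suc.prems N by auto
    have "ty_fus N (\<phi> (Gr (int k))) (\<phi> (Gr 1)) (\<phi> (Gr (int (Suc k))))"
      using fus[OF S] Suc.prems by simp
    then have "\<phi> (Gr (int (Suc k))) = Gr ((n * int k mod N + n) mod N)"
      using Suc n by simp
    also have "(n * int k mod N + n) mod N = (n * int k + n) mod N"
      by (rule mod_add_left_eq)
    also have "\<dots> = (n * int (Suc k)) mod N"
      by (simp add: distrib_left add.commute)
    finally show ?case .
  qed
  have "\<phi> a = ty_mult_obj N n a" if "a \<in> ?S" for a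
  proof (cases a)
    case (Gr i)
    then show ?thesis
      using that \<phi>_Gr[of "nat i"] by simp
  qed (simp add: ty_autoeq_fixes_Mo[OF A N])
  then show ?thesis
    using that n by blast
qed

lemma ty_autoeq_chi_invariant:
  assumes A: "ty_autoeq N chi tau (\<phi>, J)"
    and \<phi>: "\<forall>a\<in>ty_simples N. \<phi> a = ty_mult_obj N n a"
    and i: "0 \<le> i" "i < N" and j: "0 \<le> j" "j < N"
  shows "chi ((n * i) mod N) ((n * j) mod N) = chi i j"
proof -
  have "ty_adm N (Gr i) Mo (Gr j) Mo Mo Mo"
    using i j by (simp add: ty_adm_def)
  from ty_autoeqD(6)[OF A this]
  have "J (Gr i) Mo Mo * J Mo (Gr j) Mo * chi i j =
      chi ((n * i) mod N) ((n * j) mod N) * J Mo (Gr j) Mo * J (Gr i) Mo Mo"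
    using \<phi> i j by simp
  moreover have "J (Gr i) Mo Mo \<noteq> 0" "J Mo (Gr j) Mo \<noteq> 0"
    using ty_autoeqD(3)[OF A] i j by auto
  ultimately show ?thesis
    by simp
qed

text \<open>The next three identities are the compatibility condition of ty_autoeq at admissible
  tuples whose F-symbols are all 1; together they make the tensorator a coboundary.\<close>

lemma ty_autoeq_tensorator_Gr_Gr:
  assumes A: "ty_autoeq N chi tau (\<phi>, J)" and N: "N > 0"
    and \<phi>: "\<forall>a\<in>ty_simples N. \<phi> a = ty_mult_obj N n a"
    and g: "0 \<le> g" "g < N" and h: "0 \<le> h" "h < N"
  shows "J (Gr ((g + h) mod N)) Mo Mo * J (Gr g) (Gr h) (Gr ((g + h) mod N)) =
         J (Gr g) Mo Mo * J (Gr h) Mo Mo"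
proof -
  have "ty_adm N (Gr g) (Gr h) Mo Mo (Gr ((g + h) mod N)) Mo"
    using g h N by (simp add: ty_adm_def)
  from ty_autoeqD(6)[OF A this] show ?thesis
    using \<phi> g h N by (simp add: mult.commute)
qed

lemma ty_autoeq_tensorator_Mo_Mo:
  assumes A: "ty_autoeq N chi tau (\<phi>, J)" and N: "N > 0"
    and \<phi>: "\<forall>a\<in>ty_simples N. \<phi> a = ty_mult_obj N n a"
    and g: "0 \<le> g" "g < N"
  shows "J (Gr g) Mo Mo * J Mo Mo (Gr g) = J Mo Mo (Gr 0)"
proof -
  have "ty_adm N (Gr g) Mo Mo (Gr g) Mo (Gr 0)"
    using g by (simp add: ty_adm_def)
  from ty_autoeqD(6)[OF A this] show ?thesis
    using \<phi> g N ty_autoeqD(5)[OF A, of "Gr g"] by simp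
qed

lemma ty_autoeq_tensorator_Mo_Gr:
  assumes A: "ty_autoeq N chi tau (\<phi>, J)" and N: "N > 0"
    and \<phi>: "\<forall>a\<in>ty_simples N. \<phi> a = ty_mult_obj N n a"
    and g: "0 \<le> g" "g < N"
  shows "J Mo (Gr g) Mo = J (Gr g) Mo Mo"
proof -
  have "ty_adm N Mo Mo (Gr g) (Gr g) (Gr 0) Mo"
    using g N by (simp add: ty_adm_def)
  from ty_autoeqD(6)[OF A this]
  have "J Mo (Gr g) Mo * J Mo Mo (Gr g) = J Mo Mo (Gr 0)"
    using \<phi> g N ty_autoeqD(4)[OF A, of "Gr g"] by simp
  also have "\<dots> = J (Gr g) Mo Mo * J Mo Mo (Gr g)"
    using ty_autoeq_tensorator_Mo_Mo[OF A N \<phi> g] by simp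
  finally show ?thesis
    using ty_autoeqD(3)[OF A, of Mo Mo "Gr g"] g by simp
qed

lemma ty_autoeq_tensorator_coboundary:
  assumes A: "ty_autoeq N chi tau (\<phi>, J)" and N: "N > 0"
    and \<phi>: "\<forall>a\<in>ty_simples N. \<phi> a = ty_mult_obj N n a"
  obtains \<eta> where "\<forall>a\<in>ty_simples N. \<eta> a \<noteq> 0"
    and "\<forall>a\<in>ty_simples N. \<forall>b\<in>ty_simples N. \<forall>c\<in>ty_simples N.
           ty_fus N a b c \<longrightarrow> \<eta> c * J a b c = \<eta> a * \<eta> b"
proof -
  define \<eta> where "\<eta> a = (case a of Gr g \<Rightarrow> J (Gr g) Mo Mo | Mo \<Rightarrow> csqrt (J Mo Mo (Gr 0)))" for a
  have "\<eta> a \<noteq> 0" if "a \<in> ty_simples N" for a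
    using that ty_autoeqD(3)[OF A, of a Mo Mo] ty_autoeqD(3)[OF A, of Mo Mo "Gr 0"] N
    by (cases a) (auto simp: \<eta>_def)
  moreover have "\<eta> c * J a b c = \<eta> a * \<eta> b"
    if "a \<in> ty_simples N" "b \<in> ty_simples N" "c \<in> ty_simples N" "ty_fus N a b c" for a b c
    using that ty_autoeq_tensorator_Gr_Gr[OF A N \<phi>] ty_autoeq_tensorator_Mo_Gr[OF A N \<phi>]
      ty_autoeq_tensorator_Mo_Mo[OF A N \<phi>]
    by (cases a; cases b; cases c) (auto simp: \<eta>_def mult.commute power2_eq_square[symmetric])
  ultimately show ?thesis
    using that by blast
qed

section \<open>Monoidal isomorphism and the group TenAut\<close>

lemma ty_monisoI:
  assumes "x \<in> ty_auts N chi tau" "y \<in> ty_auts N chi tau"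
    and "\<And>a. a \<in> ty_simples N \<Longrightarrow> fst x a = fst y a"
    and "\<And>a. a \<in> ty_simples N \<Longrightarrow> \<eta> a \<noteq> 0"
    and "\<And>a b c. a \<in> ty_simples N \<Longrightarrow> b \<in> ty_simples N \<Longrightarrow> c \<in> ty_simples N \<Longrightarrow>
           ty_fus N a b c \<Longrightarrow> \<eta> c * snd x a b c = snd y a b c * \<eta> a * \<eta> b"
  shows "(x, y) \<in> ty_moniso N chi tau"
  using assms unfolding ty_moniso_def by blast

lemma ty_monisoE:
  assumes "(x, y) \<in> ty_moniso N chi tau"
  obtains \<eta> where "x \<in> ty_auts N chi tau" "y \<in> ty_auts N chi tau"
    and "\<forall>a\<in>ty_simples N. fst x a = fst y a"
    and "\<forall>a\<in>ty_simples N. \<eta> a \<noteq> 0"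
    and "\<forall>a\<in>ty_simples N. \<forall>b\<in>ty_simples N. \<forall>c\<in>ty_simples N.
           ty_fus N a b c \<longrightarrow> \<eta> c * snd x a b c = snd y a b c * \<eta> a * \<eta> b"
  using assms unfolding ty_moniso_def by blast

lemma ty_moniso_refl:
  assumes "x \<in> ty_auts N chi tau"
  shows "(x, x) \<in> ty_moniso N chi tau"
  using assms by (intro ty_monisoI[where \<eta> = "\<lambda>_. 1"]) simp_all

lemma ty_moniso_sym:
  assumes "(x, y) \<in> ty_moniso N chi tau"
  shows "(y, x) \<in> ty_moniso N chi tau"
proof -
  obtain \<eta> where "x \<in> ty_auts N chi tau" "y \<in> ty_auts N chi tau"
    and "\<forall>a\<in>ty_simples N. fst x a = fst y a" "\<forall>a\<in>ty_simples N. \<eta> a \<noteq> 0"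
    and "\<forall>a\<in>ty_simples N. \<forall>b\<in>ty_simples N. \<forall>c\<in>ty_simples N.
           ty_fus N a b c \<longrightarrow> \<eta> c * snd x a b c = snd y a b c * \<eta> a * \<eta> b"
    using assms by (rule ty_monisoE)
  then show ?thesis
    by (intro ty_monisoI[where \<eta> = "\<lambda>a. inverse (\<eta> a)"]) (auto simp: field_simps)
qed

lemma ty_moniso_trans:
  assumes "(x, y) \<in> ty_moniso N chi tau" "(y, z) \<in> ty_moniso N chi tau"
  shows "(x, z) \<in> ty_moniso N chi tau"
proof -
  obtain \<eta> \<theta> where "x \<in> ty_auts N chi tau" "z \<in> ty_auts N chi tau"
    and "\<forall>a\<in>ty_simples N. fst x a = fst y a" "\<forall>a\<in>ty_simples N. fst y a = fst z a"
    and "\<forall>a\<in>ty_simples N. \<eta> a \<noteq> 0" "\<forall>a\<in>ty_simples N. \<theta> a \<noteq> 0"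
    and \<eta>: "\<forall>a\<in>ty_simples N. \<forall>b\<in>ty_simples N. \<forall>c\<in>ty_simples N.
           ty_fus N a b c \<longrightarrow> \<eta> c * snd x a b c = snd y a b c * \<eta> a * \<eta> b"
    and \<theta>: "\<forall>a\<in>ty_simples N. \<forall>b\<in>ty_simples N. \<forall>c\<in>ty_simples N.
           ty_fus N a b c \<longrightarrow> \<theta> c * snd y a b c = snd z a b c * \<theta> a * \<theta> b"
    using assms by (elim ty_monisoE)
  moreover have "\<theta> c * \<eta> c * snd x a b c = snd z a b c * (\<theta> a * \<eta> a) * (\<theta> b * \<eta> b)"
    if "a \<in> ty_simples N" "b \<in> ty_simples N" "c \<in> ty_simples N" "ty_fus N a b c" for a b c
  proof -
    have "\<theta> c * \<eta> c * snd x a b c = \<theta> c * snd y a b c * \<eta> a * \<eta> b"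
      using \<eta> that by (simp add: mult.assoc)
    also have "\<dots> = snd z a b c * (\<theta> a * \<eta> a) * (\<theta> b * \<eta> b)"
      using \<theta> that by (simp add: ac_simps)
    finally show ?thesis .
  qed
  ultimately show ?thesis
    by (intro ty_monisoI[where \<eta> = "\<lambda>a. \<theta> a * \<eta> a"]) simp_all
qed

lemma ty_moniso_equiv: "equiv (ty_auts N chi tau) (ty_moniso N chi tau)"
proof (rule equivI)
  show "ty_moniso N chi tau \<subseteq> ty_auts N chi tau \<times> ty_auts N chi tau"
    by (auto elim: ty_monisoE)
qed (auto intro: refl_onI symI transI ty_moniso_refl ty_moniso_sym ty_moniso_trans)

lemma ty_adm_map:
  assumes A: "ty_autoeq N chi tau (\<phi>, J)" and "ty_adm N a b c d e f"
  shows "ty_adm N (\<phi> a) (\<phi> b) (\<phi> c) (\<phi> d) (\<phi> e) (\<phi> f)"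
proof -
  have "\<And>a. a \<in> ty_simples N \<Longrightarrow> \<phi> a \<in> ty_simples N"
    using ty_autoeqD(1)[OF A] bij_betwE by blast
  then show ?thesis
    using assms(2) ty_autoeqD(2)[OF A] unfolding ty_adm_def by auto
qed

lemma ty_comp_auts:
  assumes "x \<in> ty_auts N chi tau" "y \<in> ty_auts N chi tau" and N: "N > 0"
  shows "ty_comp x y \<in> ty_auts N chi tau"
proof -
  obtain \<phi> J \<psi> K where xy: "x = (\<phi>, J)" "y = (\<psi>, K)"
    by fastforce
  have A: "ty_autoeq N chi tau (\<phi>, J)" and B: "ty_autoeq N chi tau (\<psi>, K)"
    using assms xy by (auto simp: ty_auts_def)
  let ?S = "ty_simples N" and ?F = "ty_F N chi tau"
  have inS: "\<And>a. a \<in> ?S \<Longrightarrow> \<psi> a \<in> ?S"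
    using ty_autoeqD(1)[OF B] bij_betwE by blast
  have compat: "J (\<psi> a) (\<psi> b) (\<psi> e) * K a b e * (J (\<psi> e) (\<psi> c) (\<psi> d) * K e c d) * ?F a b c d e f =
      ?F (\<phi> (\<psi> a)) (\<phi> (\<psi> b)) (\<phi> (\<psi> c)) (\<phi> (\<psi> d)) (\<phi> (\<psi> e)) (\<phi> (\<psi> f)) *
      (J (\<psi> b) (\<psi> c) (\<psi> f) * K b c f) * (J (\<psi> a) (\<psi> f) (\<psi> d) * K a f d)"
    if adm: "ty_adm N a b c d e f" for a b c d e f
  proof -
    have "J (\<psi> a) (\<psi> b) (\<psi> e) * K a b e * (J (\<psi> e) (\<psi> c) (\<psi> d) * K e c d) * ?F a b c d e f
        = J (\<psi> a) (\<psi> b) (\<psi> e) * J (\<psi> e) (\<psi> c) (\<psi> d) * (K a b e * K e c d * ?F a b c d e f)"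
      by (simp add: ac_simps)
    also have "\<dots> = J (\<psi> a) (\<psi> b) (\<psi> e) * J (\<psi> e) (\<psi> c) (\<psi> d) *
        ?F (\<psi> a) (\<psi> b) (\<psi> c) (\<psi> d) (\<psi> e) (\<psi> f) * (K b c f * K a f d)"
      using ty_autoeqD(6)[OF B adm] by (simp add: ac_simps)
    also have "\<dots> = ?F (\<phi> (\<psi> a)) (\<phi> (\<psi> b)) (\<phi> (\<psi> c)) (\<phi> (\<psi> d)) (\<phi> (\<psi> e)) (\<phi> (\<psi> f)) *
        J (\<psi> b) (\<psi> c) (\<psi> f) * J (\<psi> a) (\<psi> f) (\<psi> d) * (K b c f * K a f d)"
      using ty_autoeqD(6)[OF A ty_adm_map[OF B adm]] by simp
    finally show ?thesis
      by (simp add: ac_simps)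
  qed
  have "ty_autoeq N chi tau (\<phi> \<circ> \<psi>, \<lambda>a b c. J (\<psi> a) (\<psi> b) (\<psi> c) * K a b c)"
    unfolding ty_autoeq_def Let_def fst_conv snd_conv
  proof (intro conjI ballI allI impI)
    show "bij_betw (\<phi> \<circ> \<psi>) ?S ?S"
      using ty_autoeqD(1)[OF A] ty_autoeqD(1)[OF B] by (rule bij_betw_trans[rotated])
  qed (use ty_autoeqD[OF A] ty_autoeqD[OF B] inS ty_autoeq_fixes_unit[OF B N] compat in auto)
  then show ?thesis
    using xy by (simp add: ty_comp_def ty_auts_def)
qed

lemma ty_comp_moniso:
  assumes "(x, x') \<in> ty_moniso N chi tau" "(y, y') \<in> ty_moniso N chi tau" and N: "N > 0"
  shows "(ty_comp x y, ty_comp x' y') \<in> ty_moniso N chi tau"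
proof -
  let ?S = "ty_simples N"
  obtain \<eta> where x: "x \<in> ty_auts N chi tau" "x' \<in> ty_auts N chi tau"
    and agree_x: "\<forall>a\<in>?S. fst x a = fst x' a" and nz_x: "\<forall>a\<in>?S. \<eta> a \<noteq> 0"
    and nat_x: "\<forall>a\<in>?S. \<forall>b\<in>?S. \<forall>c\<in>?S.
           ty_fus N a b c \<longrightarrow> \<eta> c * snd x a b c = snd x' a b c * \<eta> a * \<eta> b"
    using assms(1) by (rule ty_monisoE)
  obtain \<theta> where y: "y \<in> ty_auts N chi tau" "y' \<in> ty_auts N chi tau"
    and agree_y: "\<forall>a\<in>?S. fst y a = fst y' a" and nz_y: "\<forall>a\<in>?S. \<theta> a \<noteq> 0"
    and nat_y: "\<forall>a\<in>?S. \<forall>b\<in>?S. \<forall>c\<in>?S.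
           ty_fus N a b c \<longrightarrow> \<theta> c * snd y a b c = snd y' a b c * \<theta> a * \<theta> b"
    using assms(2) by (rule ty_monisoE)
  obtain \<psi> K where y_def: "y = (\<psi>, K)"
    by fastforce
  have B: "ty_autoeq N chi tau (\<psi>, K)"
    using y(1) y_def by (simp add: ty_auts_def)
  have inS: "\<And>a. a \<in> ?S \<Longrightarrow> \<psi> a \<in> ?S"
    using ty_autoeqD(1)[OF B] bij_betwE by blast
  have \<psi>': "\<And>a. a \<in> ?S \<Longrightarrow> fst y' a = \<psi> a"
    using agree_y y_def by simp
  show ?thesis
  proof (rule ty_monisoI[where \<eta> = "\<lambda>a. \<eta> (\<psi> a) * \<theta> a"])
    show "ty_comp x y \<in> ty_auts N chi tau" "ty_comp x' y' \<in> ty_auts N chi tau"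
      using x y N by (simp_all add: ty_comp_auts)
  next
    fix a
    assume "a \<in> ?S"
    then show "fst (ty_comp x y) a = fst (ty_comp x' y') a"
      using agree_x inS \<psi>' y_def by (simp add: ty_comp_def)
    show "\<eta> (\<psi> a) * \<theta> a \<noteq> 0"
      using \<open>a \<in> ?S\<close> nz_x nz_y inS by simp
  next
    fix a b c
    assume abc: "a \<in> ?S" "b \<in> ?S" "c \<in> ?S" "ty_fus N a b c"
    have "\<eta> (\<psi> c) * snd x (\<psi> a) (\<psi> b) (\<psi> c) =
        snd x' (\<psi> a) (\<psi> b) (\<psi> c) * \<eta> (\<psi> a) * \<eta> (\<psi> b)"
      using nat_x inS abc ty_autoeqD(2)[OF B] by simp
    moreover have "\<theta> c * K a b c = snd y' a b c * \<theta> a * \<theta> b"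
      using nat_y abc y_def by simp
    ultimately show "\<eta> (\<psi> c) * \<theta> c * snd (ty_comp x y) a b c =
        snd (ty_comp x' y') a b c * (\<eta> (\<psi> a) * \<theta> a) * (\<eta> (\<psi> b) * \<theta> b)"
      using abc \<psi>' y_def by (simp add: ty_comp_def algebra_simps)
  qed
qed

lemma ty_comp_assoc: "ty_comp (ty_comp x y) z = ty_comp x (ty_comp y z)"
  by (simp add: ty_comp_def o_def mult.assoc)

lemma ty_id_comp: "ty_comp ty_id x = x"
  by (simp add: ty_comp_def ty_id_def)

lemma ty_id_auts: "ty_id \<in> ty_auts N chi tau"
  by (simp add: ty_auts_def ty_autoeq_def ty_id_def)

lemma TenAut_carrier: "carrier (TenAut N chi tau) = ty_auts N chi tau // ty_moniso N chi tau"
  by (simp add: TenAut_def)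

lemma TenAut_one: "\<one>\<^bsub>TenAut N chi tau\<^esub> = ty_moniso N chi tau `` {ty_id}"
  by (simp add: TenAut_def)

lemma TenAut_mult:
  assumes "x \<in> ty_auts N chi tau" "y \<in> ty_auts N chi tau" "N > 0"
  shows "ty_moniso N chi tau `` {x} \<otimes>\<^bsub>TenAut N chi tau\<^esub> ty_moniso N chi tau `` {y} =
         ty_moniso N chi tau `` {ty_comp x y}"
proof -
  let ?M = "ty_moniso N chi tau"
  note equiv = ty_moniso_equiv[of N chi tau]
  have "(SOME x'. x' \<in> ?M `` {x}) \<in> ?M `` {x}" "(SOME y'. y' \<in> ?M `` {y}) \<in> ?M `` {y}"
    by (rule someI, rule equiv_class_self[OF equiv assms(1)],
        rule someI, rule equiv_class_self[OF equiv assms(2)])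
  then have "(x, SOME x'. x' \<in> ?M `` {x}) \<in> ?M" "(y, SOME y'. y' \<in> ?M `` {y}) \<in> ?M"
    by simp_all
  then have "(ty_comp x y, ty_comp (SOME x'. x' \<in> ?M `` {x}) (SOME y'. y' \<in> ?M `` {y})) \<in> ?M"
    using ty_comp_moniso assms(3) by blast
  then show ?thesis
    using equiv_class_eq[OF equiv] by (simp add: TenAut_def)
qed

lemma TenAut_group:
  assumes N: "N > 0"
    and inverse: "\<And>x. x \<in> ty_auts N chi tau \<Longrightarrow>
      \<exists>y\<in>ty_auts N chi tau. (ty_comp y x, ty_id) \<in> ty_moniso N chi tau"
  shows "group (TenAut N chi tau)"
proof -
  let ?A = "ty_auts N chi tau" and ?M = "ty_moniso N chi tau" and ?G = "TenAut N chi tau"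
  note G_mult = TenAut_mult[OF _ _ N] and comp = ty_comp_auts[OF _ _ N]
  show ?thesis
  proof (rule groupI)
    fix X Y
    assume "X \<in> carrier ?G" "Y \<in> carrier ?G"
    then show "X \<otimes>\<^bsub>?G\<^esub> Y \<in> carrier ?G"
      unfolding TenAut_carrier by (elim quotientE) (simp add: G_mult comp quotientI)
  next
    show "\<one>\<^bsub>?G\<^esub> \<in> carrier ?G"
      using TenAut_carrier TenAut_one ty_id_auts by (simp add: quotientI)
  next
    fix X Y Z
    assume "X \<in> carrier ?G" "Y \<in> carrier ?G" "Z \<in> carrier ?G"
    then show "X \<otimes>\<^bsub>?G\<^esub> Y \<otimes>\<^bsub>?G\<^esub> Z = X \<otimes>\<^bsub>?G\<^esub> (Y \<otimes>\<^bsub>?G\<^esub> Z)"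
      unfolding TenAut_carrier by (elim quotientE) (simp add: G_mult comp ty_comp_assoc)
  next
    fix X
    assume "X \<in> carrier ?G"
    then show "\<one>\<^bsub>?G\<^esub> \<otimes>\<^bsub>?G\<^esub> X = X"
      unfolding TenAut_carrier by (elim quotientE) (simp add: TenAut_one G_mult ty_id_auts ty_id_comp)
  next
    fix X
    assume "X \<in> carrier ?G"
    then obtain x where X: "X = ?M `` {x}" "x \<in> ?A"
      unfolding TenAut_carrier by (elim quotientE)
    then obtain y where y: "y \<in> ?A" "(ty_comp y x, ty_id) \<in> ?M"
      using inverse by blast
    then have "?M `` {y} \<otimes>\<^bsub>?G\<^esub> X = \<one>\<^bsub>?G\<^esub>"
      using X G_mult TenAut_one equiv_class_eq[OF ty_moniso_equiv] by simp
    moreover have "?M `` {y} \<in> carrier ?G"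
      using y TenAut_carrier by (simp add: quotientI)
    ultimately show "\<exists>Y\<in>carrier ?G. Y \<otimes>\<^bsub>?G\<^esub> X = \<one>\<^bsub>?G\<^esub>"
      by blast
  qed
qed

section \<open>TenAut as the group of square roots of unity\<close>

lemma sq1_group_carrier_iff:
  "n \<in> carrier (sq1_group N) \<longleftrightarrow> 0 \<le> n \<and> n < N \<and> coprime n N \<and> (n * n) mod N = 1 mod N"
  by (simp add: sq1_group_def)

lemma sq1_group_mult_closed:
  assumes N: "N > 0" and "n \<in> carrier (sq1_group N)" "m \<in> carrier (sq1_group N)"
  shows "(n * m) mod N \<in> carrier (sq1_group N)"
proof -
  have "((n * m) mod N * ((n * m) mod N)) mod N = ((n * n) mod N * ((m * m) mod N)) mod N"
    by (metis (no_types, lifting) mod_mult_eq mult.assoc mult.left_commute)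
  also have "\<dots> = (1 mod N * (1 mod N)) mod N"
    using assms by (simp add: sq1_group_carrier_iff)
  also have "\<dots> = 1 mod N"
    by (simp add: mod_mult_eq)
  finally show ?thesis
    using N coprime_if_square_mod_eq_one by (simp add: sq1_group_carrier_iff)
qed

text \<open>Nondegeneracy of chi enters only through chi_diag_imp_square_one.\<close>

locale ty_sq1_symmetric =
  fixes N :: int and chi :: "int \<Rightarrow> int \<Rightarrow> complex"
  assumes N_gt_1: "N > 1"
    and chi_mult_invariant:
      "n \<in> carrier (sq1_group N) \<Longrightarrow> chi ((n * i) mod N) ((n * j) mod N) = chi i j"
    and chi_diag_imp_square_one: "chi n n = chi 1 1 \<Longrightarrow> (n * n) mod N = 1 mod N"
begin

lemma N_pos: "N > 0"
  using N_gt_1 by simp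

lemma Fn_auts:
  assumes "n \<in> carrier (sq1_group N)"
  shows "ty_Fn N n \<in> ty_auts N chi tau"
  using ty_Fn_autoeq[of N n chi tau] assms N_gt_1 chi_mult_invariant
  by (simp add: ty_auts_def sq1_group_carrier_iff)

lemma auts_moniso_Fn:
  assumes x: "x \<in> ty_auts N chi tau"
  obtains n where "n \<in> carrier (sq1_group N)" "(x, ty_Fn N n) \<in> ty_moniso N chi tau"
proof -
  obtain \<phi> J where x_def: "x = (\<phi>, J)"
    by fastforce
  have A: "ty_autoeq N chi tau (\<phi>, J)"
    using x x_def by (simp add: ty_auts_def)
  obtain n where n: "0 \<le> n" "n < N" and \<phi>: "\<forall>a\<in>ty_simples N. \<phi> a = ty_mult_obj N n a"
    using ty_autoeq_obtain_mult_obj[OF A N_gt_1] by blast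
  have "chi n n = chi 1 1"
    using ty_autoeq_chi_invariant[OF A \<phi>, of 1 1] n N_gt_1 by simp
  then have "(n * n) mod N = 1 mod N"
    by (rule chi_diag_imp_square_one)
  then have n_sq1: "n \<in> carrier (sq1_group N)"
    using n coprime_if_square_mod_eq_one by (simp add: sq1_group_carrier_iff)
  obtain \<eta> where "\<forall>a\<in>ty_simples N. \<eta> a \<noteq> 0"
    and "\<forall>a\<in>ty_simples N. \<forall>b\<in>ty_simples N. \<forall>c\<in>ty_simples N.
           ty_fus N a b c \<longrightarrow> \<eta> c * J a b c = \<eta> a * \<eta> b"
    using ty_autoeq_tensorator_coboundary[OF A N_pos \<phi>] by blast
  then have "(x, ty_Fn N n) \<in> ty_moniso N chi tau"
    using x Fn_auts[OF n_sq1] \<phi>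
    by (intro ty_monisoI[where \<eta> = \<eta>]) (auto simp: x_def ty_Fn_def)
  with n_sq1 show ?thesis
    by (rule that)
qed

lemma Fn_comp_moniso:
  assumes n: "n \<in> carrier (sq1_group N)" and m: "m \<in> carrier (sq1_group N)"
  shows "(ty_comp (ty_Fn N n) (ty_Fn N m), ty_Fn N ((n * m) mod N)) \<in> ty_moniso N chi tau"
proof (rule ty_monisoI[where \<eta> = "\<lambda>_. 1"])
  show "ty_comp (ty_Fn N n) (ty_Fn N m) \<in> ty_auts N chi tau"
    using N_pos by (simp add: ty_comp_auts Fn_auts n m)
  show "ty_Fn N ((n * m) mod N) \<in> ty_auts N chi tau"
    using N_pos by (simp add: Fn_auts sq1_group_mult_closed n m)
qed (simp_all add: ty_comp_def ty_Fn_def ty_mult_obj_mult)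

lemma Fn_one_moniso: "(ty_Fn N 1, ty_id) \<in> ty_moniso N chi tau"
proof (rule ty_monisoI[where \<eta> = "\<lambda>_. 1"])
  show "ty_Fn N 1 \<in> ty_auts N chi tau"
    using N_gt_1 by (simp add: Fn_auts sq1_group_carrier_iff)
  show "ty_id \<in> ty_auts N chi tau"
    by (rule ty_id_auts)
  show "fst (ty_Fn N 1) a = fst ty_id a" if "a \<in> ty_simples N" for a
    using that ty_mult_obj_one[of a N] N_gt_1 by (simp add: ty_Fn_def ty_id_def)
qed (simp_all add: ty_id_auts ty_Fn_def ty_id_def)

lemma Fn_moniso_imp_eq:
  assumes "n \<in> carrier (sq1_group N)" "m \<in> carrier (sq1_group N)"
    and "(ty_Fn N n, ty_Fn N m) \<in> ty_moniso N chi tau"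
  shows "n = m"
proof -
  from assms(3) have "\<forall>a\<in>ty_simples N. fst (ty_Fn N n) a = fst (ty_Fn N m) a"
    by (rule ty_monisoE)
  then have "fst (ty_Fn N n) (Gr 1) = fst (ty_Fn N m) (Gr 1)"
    by (rule bspec) (use N_gt_1 in simp)
  then show ?thesis
    using assms(1,2) by (simp add: ty_Fn_def sq1_group_carrier_iff)
qed

lemma TenAut_is_group: "group (TenAut N chi tau)"
proof (rule TenAut_group)
  show "N > 0"
    by (rule N_pos)
next
  fix x
  assume x: "x \<in> ty_auts N chi tau"
  then obtain n where n: "n \<in> carrier (sq1_group N)" "(x, ty_Fn N n) \<in> ty_moniso N chi tau"
    by (rule auts_moniso_Fn)
  have Fn: "ty_Fn N n \<in> ty_auts N chi tau"
    using n(1) by (rule Fn_auts)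
  have "(ty_comp (ty_Fn N n) x, ty_comp (ty_Fn N n) (ty_Fn N n)) \<in> ty_moniso N chi tau"
    using ty_moniso_refl[OF Fn] n(2) N_pos by (rule ty_comp_moniso)
  moreover have "(n * n) mod N = 1"
    using n(1) N_gt_1 by (simp add: sq1_group_carrier_iff)
  with Fn_comp_moniso[OF n(1) n(1)]
  have "(ty_comp (ty_Fn N n) (ty_Fn N n), ty_Fn N 1) \<in> ty_moniso N chi tau"
    by simp
  ultimately have "(ty_comp (ty_Fn N n) x, ty_id) \<in> ty_moniso N chi tau"
    using Fn_one_moniso by (blast intro: ty_moniso_trans)
  with Fn show "\<exists>y\<in>ty_auts N chi tau. (ty_comp y x, ty_id) \<in> ty_moniso N chi tau"
    by blast
qed

lemma Fn_class_in_carrier: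
  assumes "n \<in> carrier (sq1_group N)"
  shows "ty_moniso N chi tau `` {ty_Fn N n} \<in> carrier (TenAut N chi tau)"
  unfolding TenAut_carrier using Fn_auts[OF assms] by (rule quotientI)

lemma Fn_class_hom:
  "(\<lambda>n. ty_moniso N chi tau `` {ty_Fn N n}) \<in> hom (sq1_group N) (TenAut N chi tau)"
proof (rule homI)
  fix n m
  assume n: "n \<in> carrier (sq1_group N)" and m: "m \<in> carrier (sq1_group N)"
  have "ty_moniso N chi tau `` {ty_Fn N n} \<otimes>\<^bsub>TenAut N chi tau\<^esub> ty_moniso N chi tau `` {ty_Fn N m}
      = ty_moniso N chi tau `` {ty_comp (ty_Fn N n) (ty_Fn N m)}"
    using Fn_auts[OF n] Fn_auts[OF m] N_pos by (rule TenAut_mult)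
  also have "\<dots> = ty_moniso N chi tau `` {ty_Fn N ((n * m) mod N)}"
    using Fn_comp_moniso[OF n m] by (rule equiv_class_eq[OF ty_moniso_equiv])
  finally show "ty_moniso N chi tau `` {ty_Fn N (n \<otimes>\<^bsub>sq1_group N\<^esub> m)} =
      ty_moniso N chi tau `` {ty_Fn N n} \<otimes>\<^bsub>TenAut N chi tau\<^esub> ty_moniso N chi tau `` {ty_Fn N m}"
    by (simp add: sq1_group_def)
qed (rule Fn_class_in_carrier)

lemma Fn_class_inj: "inj_on (\<lambda>n. ty_moniso N chi tau `` {ty_Fn N n}) (carrier (sq1_group N))"
proof (rule inj_onI)
  fix n m
  assume n: "n \<in> carrier (sq1_group N)" and m: "m \<in> carrier (sq1_group N)"
    and "ty_moniso N chi tau `` {ty_Fn N n} = ty_moniso N chi tau `` {ty_Fn N m}"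
  then have "(ty_Fn N n, ty_Fn N m) \<in> ty_moniso N chi tau"
    using eq_equiv_class_iff[OF ty_moniso_equiv Fn_auts[OF n] Fn_auts[OF m]] by simp
  with n m show "n = m"
    by (rule Fn_moniso_imp_eq)
qed

lemma Fn_class_surj:
  "(\<lambda>n. ty_moniso N chi tau `` {ty_Fn N n}) ` carrier (sq1_group N) = carrier (TenAut N chi tau)"
proof
  show "(\<lambda>n. ty_moniso N chi tau `` {ty_Fn N n}) ` carrier (sq1_group N) \<subseteq> carrier (TenAut N chi tau)"
    using Fn_class_in_carrier by blast
next
  show "carrier (TenAut N chi tau) \<subseteq> (\<lambda>n. ty_moniso N chi tau `` {ty_Fn N n}) ` carrier (sq1_group N)"
  proof
    fix X
    assume "X \<in> carrier (TenAut N chi tau)"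
    then obtain x where X: "X = ty_moniso N chi tau `` {x}" "x \<in> ty_auts N chi tau"
      unfolding TenAut_carrier by (elim quotientE)
    obtain n where n: "n \<in> carrier (sq1_group N)" and "(x, ty_Fn N n) \<in> ty_moniso N chi tau"
      using auts_moniso_Fn[OF X(2)] by blast
    then have "X = ty_moniso N chi tau `` {ty_Fn N n}"
      using X(1) equiv_class_eq[OF ty_moniso_equiv] by simp
    then show "X \<in> (\<lambda>n. ty_moniso N chi tau `` {ty_Fn N n}) ` carrier (sq1_group N)"
      using n by (rule image_eqI)
  qed
qed

lemma Fn_class_iso:
  "(\<lambda>n. ty_moniso N chi tau `` {ty_Fn N n}) \<in> iso (sq1_group N) (TenAut N chi tau)"
  using Fn_class_hom Fn_class_inj Fn_class_surj by (simp add: iso_def bij_betw_def)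

end

lemma ty_sq1_symmetric_ty_chi:
  assumes "r > 0"
  shows "ty_sq1_symmetric (2 * int r + 1) (ty_chi r)"
proof
  show "2 * int r + 1 > 1"
    using assms by simp
next
  fix n i j
  assume "n \<in> carrier (sq1_group (2 * int r + 1))"
  then show "ty_chi r ((n * i) mod (2 * int r + 1)) ((n * j) mod (2 * int r + 1)) = ty_chi r i j"
    by (simp add: sq1_group_carrier_iff ty_chi_mult_invariant)
next
  fix n
  assume "ty_chi r n n = ty_chi r 1 1"
  then show "(n * n) mod (2 * int r + 1) = 1 mod (2 * int r + 1)"
    by (rule ty_chi_diag_eq_imp_square_one)
qed

theorem lemma4p6:
  fixes r :: nat and tau :: complex
  assumes "r > 0" and "tau = 1 \<or> tau = -1"
  shows "(\<forall>n \<in> carrier (sq1_group (2 * int r + 1)).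
            ty_autoeq (2 * int r + 1) (ty_chi r) tau (ty_Fn (2 * int r + 1) n)) \<and>
         group (TenAut (2 * int r + 1) (ty_chi r) tau) \<and>
         (\<lambda>n. ty_moniso (2 * int r + 1) (ty_chi r) tau `` {ty_Fn (2 * int r + 1) n})
           \<in> iso (sq1_group (2 * int r + 1)) (TenAut (2 * int r + 1) (ty_chi r) tau)"
proof -
  interpret ty_sq1_symmetric "2 * int r + 1" "ty_chi r"
    using assms(1) by (rule ty_sq1_symmetric_ty_chi)
  show ?thesis
    using Fn_auts TenAut_is_group Fn_class_iso by (simp add: ty_auts_def)
qed

end
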